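(* For every task $h:\{-1,1\}^m\to\{-1,1\}$ (only its values on $\mathcal{X}$ mattering) we have $\deg(\mathcal{H}_{\min}(h))\le d$; that is, there exists $f:\{-1,1\}^m\to\mathbb{R}$ with $f=h$ on $\mathcal{X}$ and $\deg(f)\le d$.
   Context: Setup: integers $m\ge d\ge1$, $\mathcal{Z}=\{-1,1\}^d$, $\psi:\mathcal{Z}\to\{-1,1\}^m$ injective, $\mathcal{X}:=\psi(\mathcal{Z})$ (so $|\mathcal{X}|=2^d$). For $f:\{-1,1\}^n\to\mathbb{R}$, $f=\sum_{S\subseteq[n]}\hat f(S)\chi_S$ with $\chi_S(x)=\prod_{i\in S}x_i$ and $\deg(f)=\max\{|S|:\hat f(S)\ne0\}$. $\mathcal{H}(h)$ is the set of $f:\{-1,1\}^m\to\mathbb{R}$ agreeing with $h$ on $\mathcal{X}$, and $\deg(\mathcal{H}_{\min}(h))$ is the minimum degree of an element of $\mathcal{H}(h)$. *)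

theory Defs
  imports "HOL-Analysis.Analysis"
begin

text \<open>The hypercube {-1,1}^n, points represented as functions nat => real
  with coordinates 0..n-1 in {-1,1} and all other coordinates 0.\<close>
definition cube :: "nat \<Rightarrow> (nat \<Rightarrow> real) set" where
  "cube n = {x. (\<forall>i<n. x i = -1 \<or> x i = 1) \<and> (\<forall>i\<ge>n. x i = 0)}"

definition chi :: "nat set \<Rightarrow> (nat \<Rightarrow> real) \<Rightarrow> real" where
  "chi S x = (\<Prod>i\<in>S. x i)"

definition fourier_coeff :: "nat \<Rightarrow> ((nat \<Rightarrow> real) \<Rightarrow> real) \<Rightarrow> nat set \<Rightarrow> real" where
  "fourier_coeff n f S = (\<Sum>x\<in>cube n. f x * chi S x) / 2 ^ n"

definition fdeg :: "nat \<Rightarrow> ((nat \<Rightarrow> real) \<Rightarrow> real) \<Rightarrow> nat" where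
  "fdeg n f = Max ({card S | S. S \<subseteq> {..<n} \<and> fourier_coeff n f S \<noteq> 0} \<union> {0})"

end

theory Submission
  imports Defs
begin

text \<open>Every set X of at most 2^d points of the cube {-1,1}^k admits, for arbitrary
  prescribed values, an interpolant of degree at most d. Induct on k: split X along
  coordinate k into its slices A (x_k = 1) and B (x_k = -1) and look for f = P + x_k Q with
  P, Q independent of x_k. On A \<inter> B, Q must be half the difference of the two prescribed
  values, which is possible in degree d - 1 because |A \<inter> B| \<le> |X|/2; then P is determined
  on A \<union> B, and |A \<union> B| \<le> |X|. The image of {-1,1}^d under the injective \<psi> has 2^d points,
  so neither 1 \<le> d \<le> m nor the values of h being \<plusminus>1 is needed.\<close>

inductive low_degree :: "nat \<Rightarrow> nat \<Rightarrow> ((nat \<Rightarrow> real) \<Rightarrow> real) \<Rightarrow> bool" for m d where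
  chi: "S \<subseteq> {..<m} \<Longrightarrow> card S \<le> d \<Longrightarrow> low_degree m d (\<lambda>x. c * chi S x)"
| add: "low_degree m d f \<Longrightarrow> low_degree m d g \<Longrightarrow> low_degree m d (\<lambda>x. f x + g x)"

lemma low_degree_mono:
  "low_degree m d f \<Longrightarrow> m \<le> m' \<Longrightarrow> d \<le> d' \<Longrightarrow> low_degree m' d' f"
proof (induction rule: low_degree.induct)
  case (chi S c)
  then show ?case by (intro low_degree.chi) auto
qed (rule low_degree.add)

lemma low_degree_const: "low_degree m d (\<lambda>x. c)"
  using low_degree.chi[of "{}" m d c] by (simp add: chi_def)

lemma low_degree_mult_coord:
  "low_degree m d f \<Longrightarrow> low_degree (Suc m) (Suc d) (\<lambda>x. x m * f x)"
proof (induction rule: low_degree.induct)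
  case (chi S c)
  then have "finite S" "m \<notin> S" using finite_subset by auto
  then have "(\<lambda>x. x m * (c * chi S x)) = (\<lambda>x. c * chi (insert m S) x)"
    by (simp add: chi_def mult.left_commute)
  moreover have "low_degree (Suc m) (Suc d) (\<lambda>x. c * chi (insert m S) x)"
    using chi \<open>finite S\<close> \<open>m \<notin> S\<close> by (intro low_degree.chi) auto
  ultimately show ?case by simp
next
  case (add f g)
  then show ?case
    using low_degree.add[of "Suc m" "Suc d" "\<lambda>x. x m * f x" "\<lambda>x. x m * g x"]
    by (simp add: distrib_left)
qed

lemma low_degree_fun_upd:
  "low_degree m d f \<Longrightarrow> m \<le> k \<Longrightarrow> f (x(k := v)) = f x"
proof (induction rule: low_degree.induct)
  case (chi S c)
  then have "chi S (x(k := v)) = chi S x"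
    unfolding chi_def by (intro prod.cong) auto
  then show ?case by (simp only:)
qed simp

lemma sum_chi_mult_chi_eq_0:
  assumes "S \<subseteq> {..<m}" "T \<subseteq> {..<m}" "S \<noteq> T"
  shows "(\<Sum>x\<in>cube m. chi S x * chi T x) = 0"
proof -
  obtain i where i: "i \<in> S \<and> i \<notin> T \<or> i \<in> T \<and> i \<notin> S" using assms(3) by blast
  have "i < m" using i assms by auto
  have fin: "finite S" "finite T" using assms finite_subset by auto
  define flip where "flip x = x(i := - x i)" for x :: "nat \<Rightarrow> real"
  have flip_flip: "flip (flip x) = x" for x unfolding flip_def by auto
  have flip_cube: "flip x \<in> cube m" if "x \<in> cube m" for x
    using that \<open>i < m\<close> unfolding flip_def cube_def by auto
  have chi_flip: "chi U (flip x) = (if i \<in> U then - chi U x else chi U x)"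
    if "finite U" for U x
  proof (cases "i \<in> U")
    case True
    have "chi U (flip x) = flip x i * (\<Prod>j\<in>U - {i}. flip x j)"
      unfolding chi_def using that True by (simp add: prod.remove)
    also have "(\<Prod>j\<in>U - {i}. flip x j) = (\<Prod>j\<in>U - {i}. x j)"
      by (intro prod.cong) (auto simp: flip_def)
    also have "flip x i * \<dots> = - chi U x"
      unfolding chi_def using that True by (simp add: prod.remove flip_def)
    finally show ?thesis using True by simp
  next
    case False
    then have "chi U (flip x) = chi U x"
      unfolding chi_def by (intro prod.cong) (auto simp: flip_def)
    then show ?thesis using False by simp
  qed
  have flip_sign: "chi S (flip x) * chi T (flip x) = - (chi S x * chi T x)" for x
    using i by (auto simp: chi_flip fin)
  have "(\<Sum>x\<in>cube m. chi S x * chi T x) = (\<Sum>x\<in>cube m. chi S (flip x) * chi T (flip x))"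
    by (rule sum.reindex_bij_witness[where i=flip and j=flip]) (auto simp: flip_flip flip_cube)
  also have "\<dots> = - (\<Sum>x\<in>cube m. chi S x * chi T x)"
    by (simp add: flip_sign sum_negf)
  finally show ?thesis by simp
qed

lemma fourier_coeff_eq_0_if_low_degree:
  "low_degree m d f \<Longrightarrow> T \<subseteq> {..<m} \<Longrightarrow> d < card T \<Longrightarrow> fourier_coeff m f T = 0"
proof (induction rule: low_degree.induct)
  case (chi S c)
  then have "S \<noteq> T" by auto
  have "(\<Sum>x\<in>cube m. c * chi S x * chi T x) = c * (\<Sum>x\<in>cube m. chi S x * chi T x)"
    by (simp add: sum_distrib_left mult.assoc)
  also have "\<dots> = 0" using sum_chi_mult_chi_eq_0[OF chi(1,3) \<open>S \<noteq> T\<close>] by simp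
  finally show ?case unfolding fourier_coeff_def by simp
next
  case (add f g)
  then show ?case unfolding fourier_coeff_def
    by (simp add: distrib_right sum.distrib add_divide_distrib)
qed

lemma fdeg_le_if_low_degree:
  assumes "low_degree m d f"
  shows "fdeg m f \<le> d"
proof -
  let ?degs = "{card S | S. S \<subseteq> {..<m} \<and> fourier_coeff m f S \<noteq> 0}"
  have "finite ?degs"
    by (rule finite_subset[where B="card ` Pow {..<m}"]) auto
  moreover have "k \<le> d" if "k \<in> ?degs" for k
    using that fourier_coeff_eq_0_if_low_degree[OF assms] not_le by blast
  ultimately show ?thesis
    unfolding fdeg_def by (subst Max_le_iff) auto
qed

lemma fun_upd_in_cube_Suc:
  "y \<in> cube k \<Longrightarrow> v = 1 \<or> v = -1 \<Longrightarrow> y(k := v) \<in> cube (Suc k)"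
  unfolding cube_def by (auto simp: less_Suc_eq)

lemma fun_upd_0_in_cube:
  "x \<in> cube (Suc k) \<Longrightarrow> x(k := 0) \<in> cube k"
  unfolding cube_def by auto

lemma inj_on_fun_upd_cube: "inj_on (\<lambda>y. y(k := v)) (cube k)"
proof (rule inj_onI)
  fix y z assume "y \<in> cube k" "z \<in> cube k" "y(k := v) = z(k := v)"
  then have "(y(k := v))(k := y k) = (z(k := v))(k := z k)"
    unfolding cube_def by auto
  then show "y = z" by simp
qed

lemma finite_cube: "finite (cube n)"
proof (induction n)
  case 0
  have "cube 0 = {\<lambda>_. 0}" unfolding cube_def by auto
  then show ?case by simp
next
  case (Suc n)
  have "cube (Suc n) \<subseteq> (\<lambda>(y, v). y(n := v)) ` (cube n \<times> {1, -1})"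
  proof
    fix x assume x: "x \<in> cube (Suc n)"
    then have "x(n := 0) \<in> cube n" by (rule fun_upd_0_in_cube)
    moreover have "x n \<in> {1, -1}" using x unfolding cube_def by auto
    ultimately show "x \<in> (\<lambda>(y, v). y(n := v)) ` (cube n \<times> {1, -1})"
      by (intro image_eqI[where x="(x(n := 0), x n)"]) auto
  qed
  then show ?case by (rule finite_subset) (simp add: Suc.IH)
qed

definition cube_slice :: "(nat \<Rightarrow> real) set \<Rightarrow> nat \<Rightarrow> real \<Rightarrow> (nat \<Rightarrow> real) set" where
  "cube_slice X k v = {y \<in> cube k. y(k := v) \<in> X}"

lemma cube_slice_cases:
  assumes "X \<subseteq> cube (Suc k)" "x \<in> X"
  obtains "x k = 1" "x(k := 0) \<in> cube_slice X k 1"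
    | "x k = -1" "x(k := 0) \<in> cube_slice X k (-1)"
proof -
  have "x(k := 0) \<in> cube k" using assms by (blast intro: fun_upd_0_in_cube)
  moreover have "x k = 1 \<or> x k = -1" using assms unfolding cube_def by auto
  ultimately show ?thesis
    using that assms(2) unfolding cube_slice_def by (auto simp: fun_upd_idem)
qed

lemma card_cube_slices:
  assumes "X \<subseteq> cube (Suc k)"
  shows "card X = card (cube_slice X k 1) + card (cube_slice X k (-1))"
proof -
  let ?up = "\<lambda>y. y(k := 1)" and ?dn = "\<lambda>y. y(k := -1)"
  let ?A = "cube_slice X k 1" and ?B = "cube_slice X k (-1)"
  have "X \<subseteq> ?up ` ?A \<union> ?dn ` ?B"
  proof
    fix x assume x: "x \<in> X"
    have "x = (x(k := 0))(k := x k)" by simp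
    with cube_slice_cases[OF assms x] show "x \<in> ?up ` ?A \<union> ?dn ` ?B"
      by (metis UnI1 UnI2 image_eqI)
  qed
  then have X: "X = ?up ` ?A \<union> ?dn ` ?B"
    unfolding cube_slice_def by auto
  have disjoint: "?up ` ?A \<inter> ?dn ` ?B = {}"
    by (auto dest: fun_cong[where x=k])
  have slices: "?A \<subseteq> cube k" "?B \<subseteq> cube k"
    unfolding cube_slice_def by auto
  then have "finite ?A" "finite ?B"
    by (auto intro: finite_subset[OF _ finite_cube])
  have "card X = card (?up ` ?A \<union> ?dn ` ?B)" using X by (rule arg_cong)
  also have "\<dots> = card (?up ` ?A) + card (?dn ` ?B)"
    using \<open>finite ?A\<close> \<open>finite ?B\<close> disjoint by (intro card_Un_disjoint) auto
  also have "\<dots> = card ?A + card ?B"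
    using slices by (simp add: card_image inj_on_subset[OF inj_on_fun_upd_cube])
  finally show ?thesis .
qed

lemma card_cube: "card (cube n) = 2 ^ n"
proof (induction n)
  case 0
  have "cube 0 = {\<lambda>_. 0}" unfolding cube_def by auto
  then show ?case by simp
next
  case (Suc n)
  have "cube_slice (cube (Suc n)) n v = cube n" if "v = 1 \<or> v = -1" for v
    using fun_upd_in_cube_Suc[OF _ that] unfolding cube_slice_def by auto
  then show ?case using card_cube_slices[of "cube (Suc n)" n] Suc by simp
qed

lemma low_degree_interpolation_card_le_1:
  assumes "finite X" "card X \<le> 1"
  shows "\<exists>f. low_degree m d f \<and> (\<forall>x\<in>X. f x = g x)"
proof (cases "X = {}")
  case True
  then show ?thesis using low_degree_const by blast
next
  case False
  then have "card X = 1" using assms by (auto simp: le_Suc_eq)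
  then obtain a where "X = {a}" by (rule card_1_singletonE)
  then show ?thesis using low_degree_const[of m d "g a"] by auto
qed

lemma interpolation_by_slices:
  fixes g :: "(nat \<Rightarrow> real) \<Rightarrow> real" and k :: nat and X :: "(nat \<Rightarrow> real) set"
  defines "g_up \<equiv> \<lambda>y. g (y(k := 1))" and "g_dn \<equiv> \<lambda>y. g (y(k := -1))"
    and "A \<equiv> cube_slice X k 1" and "B \<equiv> cube_slice X k (-1)"
  assumes X_sub: "X \<subseteq> cube (Suc k)"
    and P: "low_degree k d P" and Q: "low_degree k e Q"
    and Q_AB: "\<forall>y\<in>A \<inter> B. Q y = (g_up y - g_dn y) / 2"
    and P_AB: "\<forall>y\<in>A \<union> B. P y = (if y \<in> A then g_up y - Q y else g_dn y + Q y)"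
    and "x \<in> X"
  shows "P x + x k * Q x = g x"
proof -
  define y where "y = x(k := 0)"
  have x_eq: "y(k := x k) = x" unfolding y_def by simp
  have PQ: "P x = P y" "Q x = Q y"
    unfolding y_def by (simp_all add: low_degree_fun_upd[OF P] low_degree_fun_upd[OF Q])
  from X_sub \<open>x \<in> X\<close> show ?thesis
  proof (cases rule: cube_slice_cases)
    case 1
    then have "y \<in> A" "g_up y = g x" using x_eq unfolding A_def g_up_def y_def by simp_all
    then show ?thesis using P_AB PQ \<open>x k = 1\<close> by simp
  next
    case 2
    then have "y \<in> B" "g_dn y = g x" using x_eq unfolding B_def g_dn_def y_def by simp_all
    moreover have "P y = (if y \<in> A then g_up y - Q y else g_dn y + Q y)"
      using P_AB \<open>y \<in> B\<close> by blast
    moreover have "Q y = (g_up y - g_dn y) / 2" if "y \<in> A"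
      using Q_AB \<open>y \<in> B\<close> that by blast
    ultimately show ?thesis using PQ \<open>x k = -1\<close> by (cases "y \<in> A") (auto simp: field_simps)
  qed
qed

lemma low_degree_interpolation:
  assumes "X \<subseteq> cube k" "card X \<le> 2 ^ d"
  shows "\<exists>f. low_degree k d f \<and> (\<forall>x\<in>X. f x = g x)"
  using assms
proof (induction k arbitrary: d X g)
  case 0
  have "finite X" using finite_subset[OF "0.prems"(1) finite_cube] .
  moreover have "card X \<le> 1"
    using card_mono[OF finite_cube "0.prems"(1)] by (simp add: card_cube)
  ultimately show ?case by (rule low_degree_interpolation_card_le_1)
next
  case (Suc k)
  note X_sub = Suc.prems(1) and card_X_le = Suc.prems(2)
  have "finite X" using finite_subset[OF X_sub finite_cube] .
  show ?case
  proof (cases "d = 0")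
    case True
    with card_X_le have "card X \<le> 1" by simp
    with \<open>finite X\<close> show ?thesis by (rule low_degree_interpolation_card_le_1)
  next
    case False
    then obtain e where d: "d = Suc e" using not0_implies_Suc by blast
    define A where "A = cube_slice X k 1"
    define B where "B = cube_slice X k (-1)"
    let ?g_up = "\<lambda>y. g (y(k := 1))" and ?g_dn = "\<lambda>y. g (y(k := -1))"
    have AB: "A \<subseteq> cube k" "B \<subseteq> cube k"
      unfolding A_def B_def cube_slice_def by auto
    then have "finite A" "finite B" by (auto intro: finite_subset[OF _ finite_cube])
    have card_X: "card X = card A + card B"
      unfolding A_def B_def by (rule card_cube_slices[OF X_sub])
    have "card (A \<inter> B) \<le> card A" "card (A \<inter> B) \<le> card B"
      using \<open>finite A\<close> \<open>finite B\<close> by (auto intro: card_mono)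
    moreover have "card A + card B \<le> 2 * 2 ^ e" using card_X card_X_le d by simp
    ultimately have "card (A \<inter> B) \<le> 2 ^ e" by linarith
    then obtain Q where Q: "low_degree k e Q" "\<forall>y\<in>A \<inter> B. Q y = (?g_up y - ?g_dn y) / 2"
      using Suc.IH[of "A \<inter> B" e "\<lambda>y. (?g_up y - ?g_dn y) / 2"] AB by blast
    have "card (A \<union> B) \<le> 2 ^ d" using card_Un_le[of A B] card_X card_X_le by linarith
    then obtain P where P: "low_degree k d P"
      "\<forall>y\<in>A \<union> B. P y = (if y \<in> A then ?g_up y - Q y else ?g_dn y + Q y)"
      using Suc.IH[of "A \<union> B" d "\<lambda>y. if y \<in> A then ?g_up y - Q y else ?g_dn y + Q y"] AB
      by blast
    have "low_degree (Suc k) d (\<lambda>x. P x + x k * Q x)"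
      using low_degree_mono[OF P(1)] low_degree_mult_coord[OF Q(1)] d
      by (intro low_degree.add) auto
    moreover have "\<forall>x\<in>X. P x + x k * Q x = g x"
      using interpolation_by_slices[OF X_sub P(1) Q(1)] P(2) Q(2) unfolding A_def B_def by blast
    ultimately show ?thesis by blast
  qed
qed

theorem mainTheorem7:
  fixes m d :: nat and \<psi> :: "(nat \<Rightarrow> real) \<Rightarrow> (nat \<Rightarrow> real)"
    and h :: "(nat \<Rightarrow> real) \<Rightarrow> real"
  assumes "1 \<le> d" and "d \<le> m"
    and "\<psi> \<in> cube d \<rightarrow> cube m" and "inj_on \<psi> (cube d)"
    and "\<forall>x\<in>cube m. h x = -1 \<or> h x = 1"
  shows "\<exists>f :: (nat \<Rightarrow> real) \<Rightarrow> real.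
           (\<forall>x\<in>\<psi> ` cube d. f x = h x) \<and> fdeg m f \<le> d"
proof -
  have "\<psi> ` cube d \<subseteq> cube m" using assms(3) by auto
  moreover have "card (\<psi> ` cube d) \<le> 2 ^ d"
    using card_image[OF assms(4)] card_cube by simp
  ultimately obtain f where "low_degree m d f" "\<forall>x\<in>\<psi> ` cube d. f x = h x"
    using low_degree_interpolation[of "\<psi> ` cube d" m d h] by blast
  then show ?thesis using fdeg_le_if_low_degree by blast
qed

end
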